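(* Let $w^0\subset U$ be any 3-dimensional Lagrangian subspace of the 6-dimensional symplectic space $U$, with Plücker coordinates $\tilde\pi_{ijk}$. Define $S_0:=\tilde\pi_{123}$, $S_1:=\tilde\pi_{231^*}$, $S_2:=-\tilde\pi_{132^*}$, $S_3:=\tilde\pi_{123^*}$, $S_{0^*}:=\tilde\pi_{1^*2^*3^*}$, $S_{1^*}:=\tilde\pi_{12^*3^*}$, $S_{2^*}:=-\tilde\pi_{21^*3^*}$, $S_{3^*}:=\tilde\pi_{31^*2^*}$. Then $$S_0^2S_{0^*}^2+S_1^2S_{1^*}^2+S_2^2S_{2^*}^2+S_3^2S_{3^*}^2=2S_0S_{0^*}(S_1S_{1^*}+S_2S_{2^*}+S_3S_{3^*})+2(S_1S_{1^*}S_2S_{2^*}+S_1S_{1^*}S_3S_{3^*}+S_2S_{2^*}S_3S_{3^*})-4S_{0^*}S_1S_2S_3-4S_0S_{1^*}S_{2^*}S_{3^*}.$$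
   Context: $U$ has basis $f_1,f_2,f_3,f_1^*,f_2^*,f_3^*$ and symplectic form $\omega=\sum_{j=1}^3f_j\wedge f_j^*$, i.e. $\omega(u,v)=\sum_j(u_jv_j^*-u_j^*v_j)$ in coordinates $u=\sum_j(u_jf_j+u_j^*f_j^* )$. A Lagrangian subspace is a 3-dimensional subspace on which $\omega$ vanishes. For a 3-dimensional $w$ with basis $w_1,w_2,w_3$, the Plücker coordinates $\tilde\pi_{ijk}$ ($i,j,k$ distinct in $\{1,2,3,1^*,2^*,3^*\}$) are the unique totally antisymmetric quantities with $w_1\wedge w_2\wedge w_3=\sum_{\{i,j,k\}}\tilde\pi_{ijk}\,f_i\wedge f_j\wedge f_k$, the sum over 3-element subsets each taken once in some order (the result is independent of the order by antisymmetry); they are defined up to a common scalar. *)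

theory Defs
  imports Complex_Main
begin

text \<open>Vectors of U are coordinate functions nat \<Rightarrow> complex, only indices 0..5 matter:
  index 0,1,2 = coefficient of f1,f2,f3 and index 3,4,5 = coefficient of f1*,f2*,f3*.\<close>

definition omega :: "(nat \<Rightarrow> complex) \<Rightarrow> (nat \<Rightarrow> complex) \<Rightarrow> complex" where
  "omega u v = (\<Sum>j<3. u j * v (j + 3) - u (j + 3) * v j)"

definition lincomb3 :: "complex \<Rightarrow> complex \<Rightarrow> complex \<Rightarrow> (nat \<Rightarrow> complex) \<Rightarrow> (nat \<Rightarrow> complex)
    \<Rightarrow> (nat \<Rightarrow> complex) \<Rightarrow> (nat \<Rightarrow> complex)" where
  "lincomb3 a b c w1 w2 w3 = (\<lambda>i. a * w1 i + b * w2 i + c * w3 i)"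

definition lin_indep3 :: "(nat \<Rightarrow> complex) \<Rightarrow> (nat \<Rightarrow> complex) \<Rightarrow> (nat \<Rightarrow> complex) \<Rightarrow> bool" where
  "lin_indep3 w1 w2 w3 \<longleftrightarrow>
     (\<forall>a b c. (\<forall>i<6. lincomb3 a b c w1 w2 w3 i = 0) \<longrightarrow> a = 0 \<and> b = 0 \<and> c = 0)"

definition lagrangian_span :: "(nat \<Rightarrow> complex) \<Rightarrow> (nat \<Rightarrow> complex) \<Rightarrow> (nat \<Rightarrow> complex) \<Rightarrow> bool" where
  "lagrangian_span w1 w2 w3 \<longleftrightarrow>
     (\<forall>a b c a' b' c'. omega (lincomb3 a b c w1 w2 w3) (lincomb3 a' b' c' w1 w2 w3) = 0)"

text \<open>Pluecker coordinate: coefficient of f_i \<and> f_j \<and> f_k in w1 \<and> w2 \<and> w3,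
  i.e. the 3x3 minor det [w_a(idx_b)] (Leibniz formula).\<close>
definition pl :: "(nat \<Rightarrow> complex) \<Rightarrow> (nat \<Rightarrow> complex) \<Rightarrow> (nat \<Rightarrow> complex) \<Rightarrow> nat \<Rightarrow> nat \<Rightarrow> nat \<Rightarrow> complex" where
  "pl w1 w2 w3 i j k =
      w1 i * w2 j * w3 k + w1 j * w2 k * w3 i + w1 k * w2 i * w3 j
    - w1 i * w2 k * w3 j - w1 j * w2 i * w3 k - w1 k * w2 j * w3 i"

end

theory Submission
  imports Defs
begin

text \<open>The trivector \<open>w1 \<and> w2 \<and> w3\<close> of a Lagrangian subspace is annihilated by contraction
  with \<open>\<omega>\<close>; this gives six linear relations among the twenty Pluecker coordinates, leaving
  fourteen. After this substitution the Grassmann--Pluecker quadrics generate an ideal containing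
  Cayley's \<open>2 \<times> 2 \<times> 2\<close> hyperdeterminant of the eight coordinates \<open>S\<^sub>i, S\<^sub>i*\<close>, as witnessed
  by an explicit certificate.\<close>

lemma pl_swap_12: "pl w1 w2 w3 j i k = - pl w1 w2 w3 i j k"
  unfolding pl_def by (simp add: algebra_simps)

lemma pl_swap_23: "pl w1 w2 w3 i k j = - pl w1 w2 w3 i j k"
  unfolding pl_def by (simp add: algebra_simps)

lemma pl_grassmann_pluecker:
  "pl w1 w2 w3 i j a * pl w1 w2 w3 b c d - pl w1 w2 w3 i j b * pl w1 w2 w3 a c d
   + pl w1 w2 w3 i j c * pl w1 w2 w3 a b d - pl w1 w2 w3 i j d * pl w1 w2 w3 a b c = 0"
  unfolding pl_def by algebra

lemma pl_contract_omega:
  "pl w1 w2 w3 0 3 k + pl w1 w2 w3 1 4 k + pl w1 w2 w3 2 5 k =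
   w3 k * omega w1 w2 - w2 k * omega w1 w3 + w1 k * omega w2 w3"
  unfolding pl_def omega_def by (simp add: lessThan_nat_numeral; algebra)

lemma lagrangian_span_omega:
  assumes "lagrangian_span w1 w2 w3"
  shows "omega w1 w2 = 0" "omega w1 w3 = 0" "omega w2 w3 = 0"
proof -
  have "lincomb3 1 0 0 w1 w2 w3 = w1" "lincomb3 0 1 0 w1 w2 w3 = w2" "lincomb3 0 0 1 w1 w2 w3 = w3"
    by (auto simp: lincomb3_def)
  with assms show "omega w1 w2 = 0" "omega w1 w3 = 0" "omega w2 w3 = 0"
    unfolding lagrangian_span_def by metis+
qed

lemma lagrangian_pl_contract:
  assumes "lagrangian_span w1 w2 w3"
  shows "pl w1 w2 w3 0 3 k + pl w1 w2 w3 1 4 k + pl w1 w2 w3 2 5 k = 0"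
  using pl_contract_omega lagrangian_span_omega[OF assms] by simp

text \<open>The arguments \<open>(a\<^sub>i, b\<^sub>i)\<close> are the four antipodal pairs of entries of a \<open>2 \<times> 2 \<times> 2\<close> tensor,
  with \<open>a\<^sub>1, a\<^sub>2, a\<^sub>3\<close> the neighbours of \<open>b\<^sub>0\<close>.\<close>

definition cayley_hyperdet :: "'a::comm_ring_1 \<Rightarrow> 'a \<Rightarrow> 'a \<Rightarrow> 'a \<Rightarrow> 'a \<Rightarrow> 'a \<Rightarrow> 'a \<Rightarrow> 'a \<Rightarrow> 'a" where
  "cayley_hyperdet a0 a1 a2 a3 b0 b1 b2 b3 =
     a0\<^sup>2 * b0\<^sup>2 + a1\<^sup>2 * b1\<^sup>2 + a2\<^sup>2 * b2\<^sup>2 + a3\<^sup>2 * b3\<^sup>2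
     - 2 * a0 * b0 * (a1 * b1 + a2 * b2 + a3 * b3)
     - 2 * (a1 * b1 * a2 * b2 + a1 * b1 * a3 * b3 + a2 * b2 * a3 * b3)
     + 4 * b0 * a1 * a2 * a3 + 4 * a0 * b1 * b2 * b3"

lemma cayley_hyperdet_eq_0_if_relations:
  fixes x012 x013 x014 x015 x023 x024 x034 x035 x045 x123 x134 x135 x234 x345 :: complex
  assumes r0: "- x012 * x034 + x013 * x024 - x014 * x023 = 0"
    and r1: "- x012 * x035 - x013 * x014 - x015 * x023 = 0"
    and r2: "- x012 * x045 - x014 * x014 - x015 * x024 = 0"
    and r3: "- x013 * x045 + x014 * x035 - x015 * x034 = 0"
    and r4: "- x012 * x134 - x013 * x023 - x014 * x123 = 0"
    and r5: "- x012 * x135 + x013 * x013 - x015 * x123 = 0"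
    and r6: "x013 * x035 + x014 * x135 - x015 * x134 = 0"
    and r7: "x012 * x345 - x013 * x034 - x014 * x134 - x015 * x234 = 0"
    and r8: "x014 * x034 - x023 * x045 + x024 * x035 = 0"
    and r9: "- x012 * x234 - x023 * x023 - x024 * x123 = 0"
    and r10: "- x012 * x345 + x014 * x134 + x023 * x035 + x024 * x135 = 0"
    and r11: "x014 * x234 - x023 * x034 - x024 * x134 = 0"
    and r12: "- x013 * x345 + x034 * x135 - x035 * x134 = 0"
    and r13: "- x013 * x034 + x014 * x134 + x024 * x135 - x045 * x123 = 0"
  shows "cayley_hyperdet x012 x123 (- x024) x015 x345 x045 (- x135) x234 = 0"
proof -
  have "cayley_hyperdet x012 x123 (- x024) x015 x345 x045 (- x135) x234 =
      (2 * x013 * x345 + x034 * x135 + 2 * x035 * x134) * (- x012 * x034 + x013 * x024 - x014 * x023)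
    + (- 3 * x034 * x134) * (- x012 * x035 - x013 * x014 - x015 * x023)
    + (2 * x123 * x345 + x134 * x134 + x135 * x234) * (- x012 * x045 - x014 * x014 - x015 * x024)
    + (2 * x013 * x234 + x023 * x134 + x034 * x123) * (- x013 * x045 + x014 * x035 - x015 * x034)
    + (- 2 * x014 * x345 + x034 * x035 - x045 * x134) * (- x012 * x134 - x013 * x023 - x014 * x123)
    + (2 * x024 * x345 - x034 * x034 + 2 * x045 * x234) * (- x012 * x135 + x013 * x013 - x015 * x123)
    + (x014 * x234 + 2 * x023 * x034 - x024 * x134) * (x013 * x035 + x014 * x135 - x015 * x134)
    + (x012 * x345 - x013 * x034 - x015 * x234 + x024 * x135)
        * (x012 * x345 - x013 * x034 - x014 * x134 - x015 * x234)
    + (- x023 * x135) * (x014 * x034 - x023 * x045 + x024 * x035)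
    + (x045 * x135) * (- x012 * x234 - x023 * x023 - x024 * x123)
    + (- 4 * x013 * x034 + x014 * x134 + x024 * x135)
        * (- x012 * x345 + x014 * x134 + x023 * x035 + x024 * x135)
    + (- 3 * x013 * x035) * (x014 * x234 - x023 * x034 - x024 * x134)
    + (4 * x013 * x024) * (- x013 * x345 + x034 * x135 - x035 * x134)
    + (- x045 * x123) * (- x013 * x034 + x014 * x134 + x024 * x135 - x045 * x123)"
    unfolding cayley_hyperdet_def by algebra
  also have "\<dots> = 0"
    by (simp only: assms mult_zero_right add_0_right)
  finally show ?thesis .
qed

lemma lagrangian_trivector_hyperdet_eq_0:
  fixes p :: "nat \<Rightarrow> nat \<Rightarrow> nat \<Rightarrow> complex"
  assumes swap12: "\<And>i j k. p j i k = - p i j k"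
    and swap23: "\<And>i j k. p i k j = - p i j k"
    and pluecker: "\<And>i j a b c d. p i j a * p b c d - p i j b * p a c d
                     + p i j c * p a b d - p i j d * p a b c = 0"
    and contract: "\<And>k. p 0 3 k + p 1 4 k + p 2 5 k = 0"
  shows "cayley_hyperdet (p 0 1 2) (p 1 2 3) (- p 0 2 4) (p 0 1 5)
           (p 3 4 5) (p 0 4 5) (- p 1 3 5) (p 2 3 4) = 0"
proof -
  have sort12: "p i j k = - p j i k" if "j < i" for i j k by (rule swap12)
  have sort23: "p i j k = - p i k j" if "k < j" for i j k by (rule swap23)
  have same12: "p i i k = 0" for i k using swap12[of i i k] by algebra
  have same23: "p i j j = 0" for i j using swap23[of i j j] by algebra
  note normalize = sort12 sort23 same12 same23
  have lagrangian: "p 0 2 5 = - p 0 1 4" "p 1 2 5 = p 0 1 3" "p 1 2 4 = - p 0 2 3"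
    "p 2 3 5 = - p 1 3 4" "p 2 4 5 = p 0 3 4" "p 1 4 5 = - p 0 3 5"
    using contract[of 0] contract[of 1] contract[of 2] contract[of 3] contract[of 4] contract[of 5]
    by (simp_all add: normalize) algebra+
  \<comment> \<open>The sorting rules make simp turn \<open>1\<close> into \<open>Suc 0\<close>, so we rewrite with that form throughout.\<close>
  note reduce = One_nat_def normalize lagrangian[unfolded One_nat_def]
  have r0: "- p 0 1 2 * p 0 3 4 + p 0 1 3 * p 0 2 4 - p 0 1 4 * p 0 2 3 = 0"
    using pluecker[of 0 1 0 2 3 4] by (simp add: reduce; algebra)
  have r1: "- p 0 1 2 * p 0 3 5 - p 0 1 3 * p 0 1 4 - p 0 1 5 * p 0 2 3 = 0"
    using pluecker[of 0 1 0 2 3 5] by (simp add: reduce; algebra)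
  have r2: "- p 0 1 2 * p 0 4 5 - p 0 1 4 * p 0 1 4 - p 0 1 5 * p 0 2 4 = 0"
    using pluecker[of 0 1 0 2 4 5] by (simp add: reduce; algebra)
  have r3: "- p 0 1 3 * p 0 4 5 + p 0 1 4 * p 0 3 5 - p 0 1 5 * p 0 3 4 = 0"
    using pluecker[of 0 1 0 3 4 5] by (simp add: reduce; algebra)
  have r4: "- p 0 1 2 * p 1 3 4 - p 0 1 3 * p 0 2 3 - p 0 1 4 * p 1 2 3 = 0"
    using pluecker[of 0 1 1 2 3 4] by (simp add: reduce; algebra)
  have r5: "- p 0 1 2 * p 1 3 5 + p 0 1 3 * p 0 1 3 - p 0 1 5 * p 1 2 3 = 0"
    using pluecker[of 0 1 1 2 3 5] by (simp add: reduce; algebra)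
  have r6: "p 0 1 3 * p 0 3 5 + p 0 1 4 * p 1 3 5 - p 0 1 5 * p 1 3 4 = 0"
    using pluecker[of 0 1 1 3 4 5] by (simp add: reduce; algebra)
  have r7: "p 0 1 2 * p 3 4 5 - p 0 1 3 * p 0 3 4 - p 0 1 4 * p 1 3 4 - p 0 1 5 * p 2 3 4 = 0"
    using pluecker[of 0 1 2 3 4 5] by (simp add: reduce; algebra)
  have r8: "p 0 1 4 * p 0 3 4 - p 0 2 3 * p 0 4 5 + p 0 2 4 * p 0 3 5 = 0"
    using pluecker[of 0 2 0 3 4 5] by (simp add: reduce; algebra)
  have r9: "- p 0 1 2 * p 2 3 4 - p 0 2 3 * p 0 2 3 - p 0 2 4 * p 1 2 3 = 0"
    using pluecker[of 0 2 1 2 3 4] by (simp add: reduce; algebra)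
  have r10: "- p 0 1 2 * p 3 4 5 + p 0 1 4 * p 1 3 4 + p 0 2 3 * p 0 3 5 + p 0 2 4 * p 1 3 5 = 0"
    using pluecker[of 0 2 1 3 4 5] by (simp add: reduce; algebra)
  have r11: "p 0 1 4 * p 2 3 4 - p 0 2 3 * p 0 3 4 - p 0 2 4 * p 1 3 4 = 0"
    using pluecker[of 0 2 2 3 4 5] by (simp add: reduce; algebra)
  have r12: "- p 0 1 3 * p 3 4 5 + p 0 3 4 * p 1 3 5 - p 0 3 5 * p 1 3 4 = 0"
    using pluecker[of 0 3 1 3 4 5] by (simp add: reduce; algebra)
  have r13: "- p 0 1 3 * p 0 3 4 + p 0 1 4 * p 1 3 4 + p 0 2 4 * p 1 3 5 - p 0 4 5 * p 1 2 3 = 0"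
    using pluecker[of 0 4 1 2 3 5] by (simp add: reduce; algebra)
  show ?thesis
    by (rule cayley_hyperdet_eq_0_if_relations[OF r0 r1 r2 r3 r4 r5 r6 r7 r8 r9 r10 r11 r12 r13])
qed

theorem mainTheorem12:
  fixes w1 w2 w3 :: "nat \<Rightarrow> complex"
  assumes "lin_indep3 w1 w2 w3"
    and "lagrangian_span w1 w2 w3"
  defines "S0 \<equiv> pl w1 w2 w3 0 1 2"
    and "S1 \<equiv> pl w1 w2 w3 1 2 3"
    and "S2 \<equiv> - pl w1 w2 w3 0 2 4"
    and "S3 \<equiv> pl w1 w2 w3 0 1 5"
    and "S0' \<equiv> pl w1 w2 w3 3 4 5"
    and "S1' \<equiv> pl w1 w2 w3 0 4 5"
    and "S2' \<equiv> - pl w1 w2 w3 1 3 5"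
    and "S3' \<equiv> pl w1 w2 w3 2 3 4"
  shows "S0\<^sup>2 * S0'\<^sup>2 + S1\<^sup>2 * S1'\<^sup>2 + S2\<^sup>2 * S2'\<^sup>2 + S3\<^sup>2 * S3'\<^sup>2 =
    2 * S0 * S0' * (S1 * S1' + S2 * S2' + S3 * S3')
    + 2 * (S1 * S1' * S2 * S2' + S1 * S1' * S3 * S3' + S2 * S2' * S3 * S3')
    - 4 * S0' * S1 * S2 * S3 - 4 * S0 * S1' * S2' * S3'"
proof -
  have "cayley_hyperdet S0 S1 S2 S3 S0' S1' S2' S3' = 0"
    unfolding S0_def S1_def S2_def S3_def S0'_def S1'_def S2'_def S3'_def
    by (rule lagrangian_trivector_hyperdet_eq_0[OF pl_swap_12 pl_swap_23 pl_grassmann_pluecker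
          lagrangian_pl_contract[OF assms(2)]])
  then show ?thesis
    unfolding cayley_hyperdet_def by (simp add: algebra_simps)
qed

end
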